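(* Let $R\subseteq S$, $\sigma$ be as in the context. Let $\mathbf{a}=(a_1,\ldots,a_\ell)\in(S^* )^\ell$ and $\beta_{i,j}\in S$ for $1\le i\le\ell$, $1\le j\le n_i$, satisfying: (i) $a_i-a_j^\beta\in S^*$ for all $\beta\in S^*$ and $1\le i<j\le\ell$; (ii) for each $i$, $\beta_{i,1},\ldots,\beta_{i,n_i}$ are $R$-linearly independent. Then there exist units $\gamma_{i,j}\in S^*$ ($1\le i\le\ell$, $1\le j\le n_i$) with $\gamma_{1,1}=\beta_{1,1}$, such that the skew polynomials $$G_{i,j}=\big(x-a_i^{\gamma_{i,j}}\big)\cdots\big(x-a_i^{\gamma_{i,1}}\big)\big(x-a_{i-1}^{\gamma_{i-1,n_{i-1}}}\big)\cdots\big(x-a_{i-1}^{\gamma_{i-1,1}}\big)\cdots\big(x-a_1^{\gamma_{1,n_1}}\big)\cdots\big(x-a_1^{\gamma_{1,1}}\big)\in S[x;\sigma]$$ have degree $\deg(G_{i,j})=\sum_{u=1}^{i-1}n_u+j$ and satisfy, for all $1\le u\le\ell$, $1\le v\le n_u$: $G_{i,j}(a_u^{\beta_{u,v}})=0$ if $u\le i-1$, or if $u=i$ and $v\le j$; and $G_{i,j}(a_u^{\beta_{u,v}})\in S^*$ if $u\ge i+1$, or if $u=i$ and $v\ge j+1$. This holds for all $1\le i\le\ell$ and $1\le j\le n_i$.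
   Context: $R$ is a finite commutative chain ring with maximal ideal $\mathfrak{m}$, $q=|R/\mathfrak{m}|$; $S=R[x]/(h)$ with $h$ monic of degree $m$ irreducible modulo $\mathfrak{m}$, local with maximal ideal $\mathfrak{M}=\mathfrak{m}S$ and unit group $S^*=S\setminus\mathfrak{M}$. $\sigma$ is a ring automorphism of $S$ generating the Galois group of $R\subseteq S$, with fixed ring $R$, reducing modulo $\mathfrak{M}$ to $y\mapsto y^q$ on $\mathbb{F}_{q^m}$. $S[x;\sigma]$ is the skew polynomial ring with $xa=\sigma(a)x$. For $a\in S$ and $\beta\in S^*$, $a^\beta=\sigma(\beta)a\beta^{-1}$. For $F\in S[x;\sigma]$ and $b\in S$, the remainder evaluation $F(b)$ is the unique $c\in S$ such that $F=Q\cdot(x-b)+c$ for some $Q\in S[x;\sigma]$. *)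

theory Defs
  imports "HOL-Computational_Algebra.Polynomial"
begin

text \<open>The ring S is the ambient type 'a (a commutative ring); R is a subset of it.\<close>

definition subring_of :: "'a::comm_ring_1 set \<Rightarrow> bool" where
  "subring_of R \<longleftrightarrow> 0 \<in> R \<and> 1 \<in> R \<and>
     (\<forall>x\<in>R. \<forall>y\<in>R. x + y \<in> R \<and> x * y \<in> R \<and> - x \<in> R)"

definition ideal_of :: "'a::comm_ring_1 set \<Rightarrow> 'a set \<Rightarrow> bool" where
  "ideal_of R I \<longleftrightarrow> I \<subseteq> R \<and> 0 \<in> I \<and> (\<forall>x\<in>I. \<forall>y\<in>I. x + y \<in> I) \<and>
     (\<forall>r\<in>R. \<forall>x\<in>I. r * x \<in> I)"

definition chain_ring :: "'a::comm_ring_1 set \<Rightarrow> bool" where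
  "chain_ring R \<longleftrightarrow> subring_of R \<and>
     (\<forall>I J. ideal_of R I \<and> ideal_of R J \<longrightarrow> I \<subseteq> J \<or> J \<subseteq> I)"

definition max_ideal :: "'a::comm_ring_1 set \<Rightarrow> 'a set" where
  "max_ideal R = {r \<in> R. \<not> (\<exists>s\<in>R. r * s = 1)}"

text \<open>q = |R / m| = |R| / |m|.\<close>
definition res_card :: "'a::comm_ring_1 set \<Rightarrow> nat" where
  "res_card R = card R div card (max_ideal R)"

definition ext_ideal :: "'a::comm_ring_1 set \<Rightarrow> 'a set" where
  "ext_ideal R = {x. \<exists>n (f::nat \<Rightarrow> 'a) g. (\<forall>i<n. f i \<in> max_ideal R) \<and> x = (\<Sum>i<n. f i * g i)}"

definition Rpoly :: "'a::comm_ring_1 set \<Rightarrow> 'a poly \<Rightarrow> bool" where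
  "Rpoly R p \<longleftrightarrow> (\<forall>i. coeff p i \<in> R)"

definition irreducible_mod :: "'a::comm_ring_1 set \<Rightarrow> 'a poly \<Rightarrow> bool" where
  "irreducible_mod R h \<longleftrightarrow> 0 < degree h \<and>
     \<not> (\<exists>f g. Rpoly R f \<and> Rpoly R g \<and> 0 < degree f \<and> 0 < degree g \<and>
            degree f + degree g = degree h \<and>
            lead_coeff f \<notin> max_ideal R \<and> lead_coeff g \<notin> max_ideal R \<and>
            (\<forall>k. coeff (h - f * g) k \<in> max_ideal R))"

definition ring_aut :: "('a::comm_ring_1 \<Rightarrow> 'a) \<Rightarrow> bool" where
  "ring_aut \<sigma> \<longleftrightarrow> bij \<sigma> \<and> \<sigma> 1 = 1 \<and> (\<forall>x y. \<sigma> (x + y) = \<sigma> x + \<sigma> y \<and> \<sigma> (x * y) = \<sigma> x * \<sigma> y)"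

text \<open>The standing setting: R finite commutative chain ring, S (= the type 'a) equals
  R[x]/(h) via x \<mapsto> \<theta>, with h monic irreducible mod m; \<sigma> a ring automorphism of S
  generating Gal(S/R), fixed ring R, reducing to y \<mapsto> y^q modulo M = mS.\<close>
definition galois_setting :: "'a::comm_ring_1 set \<Rightarrow> 'a poly \<Rightarrow> 'a \<Rightarrow> ('a \<Rightarrow> 'a) \<Rightarrow> bool" where
  "galois_setting R h \<theta> \<sigma> \<longleftrightarrow>
     finite R \<and> (0::'a) \<noteq> 1 \<and> chain_ring R \<and>
     Rpoly R h \<and> lead_coeff h = 1 \<and> irreducible_mod R h \<and>
     poly h \<theta> = 0 \<and> (\<forall>s. \<exists>!f. Rpoly R f \<and> degree f < degree h \<and> poly f \<theta> = s) \<and>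
     ring_aut \<sigma> \<and> {x. \<sigma> x = x} = R \<and>
     (\<forall>\<tau>. ring_aut \<tau> \<and> (\<forall>r\<in>R. \<tau> r = r) \<longrightarrow> (\<exists>k. \<tau> = \<sigma> ^^ k)) \<and>
     (\<forall>y. \<sigma> y - y ^ res_card R \<in> ext_ideal R)"

text \<open>Skew polynomials S[x;\<sigma>] are represented by their coefficient sequences (type 'a poly);
  multiplication uses x a = \<sigma>(a) x.\<close>
definition skew_mult :: "('a::comm_ring_1 \<Rightarrow> 'a) \<Rightarrow> 'a poly \<Rightarrow> 'a poly \<Rightarrow> 'a poly" where
  "skew_mult \<sigma> f g = (\<Sum>i\<le>degree f. monom (coeff f i) i * map_poly (\<sigma> ^^ i) g)"

definition skew_prod :: "('a::comm_ring_1 \<Rightarrow> 'a) \<Rightarrow> 'a poly list \<Rightarrow> 'a poly" where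
  "skew_prod \<sigma> ps = foldr (skew_mult \<sigma>) ps 1"

definition skew_eval :: "('a::comm_ring_1 \<Rightarrow> 'a) \<Rightarrow> 'a poly \<Rightarrow> 'a \<Rightarrow> 'a" where
  "skew_eval \<sigma> F b = (THE c. \<exists>Q. F = skew_mult \<sigma> Q [:- b, 1:] + [:c:])"

definition unit_inv :: "'a::comm_ring_1 \<Rightarrow> 'a" where
  "unit_inv b = (THE y. b * y = 1)"

text \<open>a^\<beta> = \<sigma>(\<beta>) a \<beta>^{-1}.\<close>
definition sconj :: "('a::comm_ring_1 \<Rightarrow> 'a) \<Rightarrow> 'a \<Rightarrow> 'a \<Rightarrow> 'a" where
  "sconj \<sigma> \<beta> a = \<sigma> \<beta> * a * unit_inv \<beta>"

definition is_unit_S :: "'a::comm_ring_1 \<Rightarrow> bool" where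
  "is_unit_S a \<longleftrightarrow> (\<exists>b. a * b = 1)"

definition idx_pairs :: "(nat \<Rightarrow> nat) \<Rightarrow> nat \<Rightarrow> nat \<Rightarrow> (nat \<times> nat) list" where
  "idx_pairs n i j = concat (map (\<lambda>u. map (\<lambda>v. (u, v)) [1..<n u + 1]) [1..<i])
                     @ map (\<lambda>v. (i, v)) [1..<j + 1]"

text \<open>G_{i,j} = (x - a_i^{\<gamma>_{i,j}}) ... (x - a_1^{\<gamma>_{1,1}}).\<close>
definition G_poly :: "('a::comm_ring_1 \<Rightarrow> 'a) \<Rightarrow> (nat \<Rightarrow> 'a) \<Rightarrow> (nat \<Rightarrow> nat \<Rightarrow> 'a) \<Rightarrow>
    (nat \<Rightarrow> nat) \<Rightarrow> nat \<Rightarrow> nat \<Rightarrow> 'a poly" where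
  "G_poly \<sigma> a \<gamma> n i j =
     skew_prod \<sigma> (rev (map (\<lambda>(u, v). [:- sconj \<sigma> (\<gamma> u v) (a u), 1:]) (idx_pairs n i j)))"

end

theory Submission
  imports Defs "HOL-Library.Sublist"
begin

(*
  Remainder evaluation turns skew products into R-linear maps: the remainder of
  (x - c_k) ... (x - c_1) at a conjugate a^b, multiplied by b, is the image of b under the composite
  of the maps y \<mapsto> \<sigma>(y) a - c y, which are R-linear because \<sigma> fixes R. The \<gamma>'s are chosen
  greedily in the order of the factors: \<gamma>_{i,j} is the image of \<beta>_{i,j} under the map of the
  product built so far, so the new factor x - a_i^\<gamma>_{i,j} annihilates a_i^\<beta>_{i,j}. The new map
  y \<mapsto> \<sigma>(y) a_u - a_i^\<gamma> y has kernel R \<gamma> for u = i and, by condition (i), trivial kernel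
  for u \<noteq> i. Hence the images of the \<beta>'s not yet treated stay R-linearly independent in every
  block, and an element of S without R-torsion is a unit; this gives the unit values.

  Both the last fact and the factorisation y = r z (r \<in> R, z a unit) used for the kernels hold
  because S is local with maximal ideal \<pi> S, where \<pi> generates the maximal ideal of the chain
  ring R. That elements outside \<pi> S are units follows from the Frobenius congruence for \<sigma>,
  which has finite order since it generates the Galois group.
*)

lemma ring_aut_add: "ring_aut \<sigma> \<Longrightarrow> \<sigma> (x + y) = \<sigma> x + \<sigma> y"
  and ring_aut_mult: "ring_aut \<sigma> \<Longrightarrow> \<sigma> (x * y) = \<sigma> x * \<sigma> y"
  and ring_aut_one: "ring_aut \<sigma> \<Longrightarrow> \<sigma> 1 = 1"
  by (simp_all add: ring_aut_def)

lemma ring_aut_zero: "ring_aut \<sigma> \<Longrightarrow> \<sigma> 0 = 0"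
  using ring_aut_add[of \<sigma> 0 0] by simp

lemma ring_aut_diff: "ring_aut \<sigma> \<Longrightarrow> \<sigma> (x - y) = \<sigma> x - \<sigma> y"
  using ring_aut_add[of \<sigma> "x - y" y] by (simp add: algebra_simps)

lemma ring_aut_sum: "ring_aut \<sigma> \<Longrightarrow> \<sigma> (\<Sum>i\<in>A. g i) = (\<Sum>i\<in>A. \<sigma> (g i))"
  by (induction A rule: infinite_finite_induct) (simp_all add: ring_aut_zero ring_aut_add)

lemma ring_aut_funpow: "ring_aut \<sigma> \<Longrightarrow> ring_aut (\<sigma> ^^ k)"
  by (induction k) (auto simp: ring_aut_def bij_id[unfolded id_def] bij_comp)

lemma ring_aut_unit: "ring_aut \<sigma> \<Longrightarrow> x dvd 1 \<Longrightarrow> \<sigma> x dvd 1"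
  by (metis dvdE dvdI ring_aut_mult ring_aut_one)

lemma coeff_map_poly_ring_aut: "ring_aut \<sigma> \<Longrightarrow> coeff (map_poly \<sigma> p) k = \<sigma> (coeff p k)"
  by (simp add: coeff_map_poly ring_aut_zero)

lemma map_poly_ring_aut_add:
  "ring_aut \<sigma> \<Longrightarrow> map_poly \<sigma> (p + q) = map_poly \<sigma> p + map_poly \<sigma> q"
  by (rule poly_eqI) (simp add: coeff_map_poly_ring_aut ring_aut_add)

lemma map_poly_ring_aut_const: "ring_aut \<sigma> \<Longrightarrow> map_poly \<sigma> [:c:] = [:\<sigma> c:]"
  by (simp add: map_poly_pCons ring_aut_zero)

lemma is_unit_S_iff: "is_unit_S x \<longleftrightarrow> x dvd 1"
  unfolding is_unit_S_def dvd_def by (metis mult.commute)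

lemma dvd_one_mult: "x dvd 1 \<Longrightarrow> y dvd 1 \<Longrightarrow> x * y dvd (1::'a::comm_monoid_mult)"
  using mult_dvd_mono[of x 1 y 1] by simp

lemma unit_inv_unique: "b * y = 1 \<Longrightarrow> unit_inv b = y"
  unfolding unit_inv_def
proof (rule the_equality)
  fix y' assume "b * y = 1" "b * y' = 1"
  then show "y' = y" by (metis mult.assoc mult.commute mult_1_left)
qed

lemma unit_inv_one: "unit_inv 1 = 1"
  by (rule unit_inv_unique) simp

lemma unit_inv: "b dvd 1 \<Longrightarrow> b * unit_inv b = 1"
  by (metis dvdE unit_inv_unique)

lemma unit_inv_dvd_one: "b dvd 1 \<Longrightarrow> unit_inv b dvd 1"
  by (metis dvdI mult.commute unit_inv)

lemma one_minus_nilpotent_dvd_one: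
  fixes w :: "'a::comm_ring_1"
  assumes "w ^ k = 0"
  shows "1 - w dvd 1"
proof -
  have "(1 - w) * (\<Sum>i<k. w ^ i) = 1"
    using one_diff_power_eq[of w k] assms by simp
  then show ?thesis by (rule dvdI[OF sym])
qed

section \<open>Skew polynomials\<close>

lemma coeff_skew_mult:
  assumes "ring_aut \<sigma>"
  shows "coeff (skew_mult \<sigma> f g) k = (\<Sum>i\<le>k. coeff f i * (\<sigma> ^^ i) (coeff g (k - i)))"
proof -
  have coeff_map: "coeff (map_poly (\<sigma> ^^ i) g) j = (\<sigma> ^^ i) (coeff g j)" for i j
    using coeff_map_poly_ring_aut[OF ring_aut_funpow[OF assms]] .
  have "coeff (skew_mult \<sigma> f g) k
      = (\<Sum>i\<le>degree f. if k < i then 0 else coeff f i * (\<sigma> ^^ i) (coeff g (k - i)))"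
    by (simp add: skew_mult_def coeff_sum coeff_monom_mult not_le) (simp only: coeff_map)
  also have "\<dots> = (\<Sum>i\<le>max k (degree f). if k < i then 0 else coeff f i * (\<sigma> ^^ i) (coeff g (k - i)))"
    by (rule sum.mono_neutral_left) (auto simp: coeff_eq_0)
  also have "\<dots> = (\<Sum>i\<le>k. coeff f i * (\<sigma> ^^ i) (coeff g (k - i)))"
    by (rule sum.mono_neutral_cong_right) auto
  finally show ?thesis .
qed

lemma skew_mult_add_left:
  "ring_aut \<sigma> \<Longrightarrow> skew_mult \<sigma> (f + g) p = skew_mult \<sigma> f p + skew_mult \<sigma> g p"
  by (rule poly_eqI) (simp add: coeff_skew_mult distrib_right sum.distrib)

lemma skew_mult_diff_left:
  "ring_aut \<sigma> \<Longrightarrow> skew_mult \<sigma> (f - g) p = skew_mult \<sigma> f p - skew_mult \<sigma> g p"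
  by (rule poly_eqI) (simp add: coeff_skew_mult left_diff_distrib sum_subtractf)

lemma skew_mult_smult_left:
  "ring_aut \<sigma> \<Longrightarrow> skew_mult \<sigma> (smult c f) p = smult c (skew_mult \<sigma> f p)"
  by (rule poly_eqI) (simp add: coeff_skew_mult sum_distrib_left mult.assoc)

lemma skew_mult_const_left:
  assumes "ring_aut \<sigma>"
  shows "skew_mult \<sigma> [:c:] p = smult c p"
proof (rule poly_eqI)
  fix k
  have "coeff (skew_mult \<sigma> [:c:] p) k = (\<Sum>i\<in>{0}. coeff [:c:] i * (\<sigma> ^^ i) (coeff p (k - i)))"
    unfolding coeff_skew_mult[OF assms]
    by (rule sum.mono_neutral_right) (auto simp: coeff_pCons split: nat.splits)
  then show "coeff (skew_mult \<sigma> [:c:] p) k = coeff (smult c p) k" by simp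
qed

lemma skew_mult_linear_left:
  assumes "ring_aut \<sigma>"
  shows "skew_mult \<sigma> [:- c, 1:] p = pCons 0 (map_poly \<sigma> p) - smult c p"
proof (rule poly_eqI)
  fix k
  have "coeff (skew_mult \<sigma> [:- c, 1:] p) k
      = (\<Sum>i\<in>{0, 1} \<inter> {..k}. coeff [:- c, 1:] i * (\<sigma> ^^ i) (coeff p (k - i)))"
    unfolding coeff_skew_mult[OF assms]
    by (rule sum.mono_neutral_right) (auto simp: coeff_pCons split: nat.splits)
  then show "coeff (skew_mult \<sigma> [:- c, 1:] p) k = coeff (pCons 0 (map_poly \<sigma> p) - smult c p) k"
    by (cases k) (auto simp: coeff_map_poly_ring_aut[OF assms] insert_absorb)
qed

lemma skew_mult_x_left:
  assumes "ring_aut \<sigma>"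
  shows "skew_mult \<sigma> (pCons 0 (map_poly \<sigma> f)) p = pCons 0 (map_poly \<sigma> (skew_mult \<sigma> f p))"
proof (rule poly_eqI)
  fix k
  show "coeff (skew_mult \<sigma> (pCons 0 (map_poly \<sigma> f)) p) k
      = coeff (pCons 0 (map_poly \<sigma> (skew_mult \<sigma> f p))) k"
    by (cases k) (simp_all add: coeff_skew_mult assms sum.atMost_Suc_shift coeff_map_poly_ring_aut
        ring_aut_sum ring_aut_mult del: sum.atMost_Suc)
qed

lemma skew_mult_linear_assoc:
  "ring_aut \<sigma> \<Longrightarrow>
    skew_mult \<sigma> [:- c, 1:] (skew_mult \<sigma> f p) = skew_mult \<sigma> (skew_mult \<sigma> [:- c, 1:] f) p"
  by (simp add: skew_mult_linear_left skew_mult_diff_left skew_mult_x_left skew_mult_smult_left)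

lemma coeff_skew_mult_linear_right:
  assumes "ring_aut \<sigma>"
  shows "coeff (skew_mult \<sigma> f [:- b, 1:]) (Suc (degree f)) = lead_coeff f"
proof -
  have "coeff (skew_mult \<sigma> f [:- b, 1:]) (Suc (degree f))
      = (\<Sum>i\<in>{degree f}. coeff f i * (\<sigma> ^^ i) (coeff [:- b, 1:] (Suc (degree f) - i)))"
    unfolding coeff_skew_mult[OF assms]
    by (rule sum.mono_neutral_right)
      (auto simp: coeff_pCons coeff_eq_0 ring_aut_zero[OF ring_aut_funpow[OF assms]] Suc_diff_le
        split: nat.splits)
  then show ?thesis by (simp add: ring_aut_one[OF ring_aut_funpow[OF assms]])
qed

lemma skew_eval_eqI:
  assumes "ring_aut \<sigma>" and F: "F = skew_mult \<sigma> Q [:- b, 1:] + [:c:]"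
  shows "skew_eval \<sigma> F b = c"
  unfolding skew_eval_def
proof (rule the_equality)
  show "\<exists>Q. F = skew_mult \<sigma> Q [:- b, 1:] + [:c:]" using F by blast
next
  fix c' assume "\<exists>Q'. F = skew_mult \<sigma> Q' [:- b, 1:] + [:c':]"
  then obtain Q' where "F = skew_mult \<sigma> Q' [:- b, 1:] + [:c':]" by blast
  with F have "skew_mult \<sigma> Q [:- b, 1:] = F - [:c:]" "skew_mult \<sigma> Q' [:- b, 1:] = F - [:c':]"
    by (simp_all add: eq_diff_eq)
  then have rem: "skew_mult \<sigma> (Q - Q') [:- b, 1:] = [:c' - c:]"
    by (simp add: skew_mult_diff_left[OF assms(1)])
  then have "lead_coeff (Q - Q') = 0"
    using coeff_skew_mult_linear_right[OF assms(1), of "Q - Q'" b] by simp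
  then have "Q - Q' = 0" by (simp only: leading_coeff_0_iff)
  with rem show "c' = c"
    by (simp add: skew_mult_const_left[OF assms(1), of 0, simplified])
qed

(* lin_prod \<sigma> [c_1, ..., c_k] = (x - c_k) ... (x - c_1):
   the first constant gives the rightmost factor. *)
definition lin_prod :: "('a::comm_ring_1 \<Rightarrow> 'a) \<Rightarrow> 'a list \<Rightarrow> 'a poly" where
  "lin_prod \<sigma> cs = skew_prod \<sigma> (rev (map (\<lambda>c. [:- c, 1:]) cs))"

lemma lin_prod_Nil [simp]: "lin_prod \<sigma> [] = 1"
  by (simp add: lin_prod_def skew_prod_def)

lemma lin_prod_snoc [simp]: "lin_prod \<sigma> (cs @ [c]) = skew_mult \<sigma> [:- c, 1:] (lin_prod \<sigma> cs)"
  by (simp add: lin_prod_def skew_prod_def)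

lemma degree_lin_prod:
  assumes "ring_aut \<sigma>" and "(0::'a::comm_ring_1) \<noteq> 1"
  shows "degree (lin_prod \<sigma> (cs :: 'a list)) = length cs \<and> lead_coeff (lin_prod \<sigma> cs) = 1"
proof (induction cs rule: rev_induct)
  case (snoc c cs)
  let ?F = "lin_prod \<sigma> cs"
  from snoc have IH: "degree ?F = length cs" "coeff ?F (length cs) = 1" by auto
  have F: "lin_prod \<sigma> (cs @ [c]) = pCons 0 (map_poly \<sigma> ?F) - smult c ?F"
    by (simp add: skew_mult_linear_left[OF assms(1)])
  have lead: "coeff (lin_prod \<sigma> (cs @ [c])) (Suc (length cs)) = 1"
    using IH unfolding F by (simp add: coeff_map_poly_ring_aut[OF assms(1)] coeff_eq_0 ring_aut_one[OF assms(1)])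
  have "degree (lin_prod \<sigma> (cs @ [c])) \<le> Suc (length cs)"
    using IH unfolding F by (intro degree_le)
      (auto simp: coeff_pCons coeff_map_poly_ring_aut[OF assms(1)] ring_aut_zero[OF assms(1)] coeff_eq_0
        split: nat.splits)
  moreover have "Suc (length cs) \<le> degree (lin_prod \<sigma> (cs @ [c]))"
    using lead assms(2) by (intro le_degree) simp
  ultimately show ?case using lead by simp
qed simp

definition skew_op :: "('a::comm_ring_1 \<Rightarrow> 'a) \<Rightarrow> 'a \<Rightarrow> 'a list \<Rightarrow> 'a \<Rightarrow> 'a" where
  "skew_op \<sigma> a cs y = foldl (\<lambda>z c. \<sigma> z * a - c * z) y cs"

lemma skew_op_Nil [simp]: "skew_op \<sigma> a [] y = y"
  and skew_op_snoc [simp]: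
    "skew_op \<sigma> a (cs @ [c]) y = \<sigma> (skew_op \<sigma> a cs y) * a - c * skew_op \<sigma> a cs y"
  by (simp_all add: skew_op_def)

lemma lin_prod_division:
  assumes "ring_aut \<sigma>"
  shows "\<exists>Q. lin_prod \<sigma> cs = skew_mult \<sigma> Q [:- b, 1:] + [:skew_op \<sigma> b cs 1:]"
proof (induction cs rule: rev_induct)
  case Nil
  show ?case by (rule exI[of _ 0]) (simp add: skew_mult_const_left[OF assms, of 0, simplified] one_pCons)
next
  case (snoc c cs)
  then obtain Q where Q: "lin_prod \<sigma> cs = skew_mult \<sigma> Q [:- b, 1:] + [:skew_op \<sigma> b cs 1:]" ..
  let ?e = "skew_op \<sigma> b cs 1"
  have distrib: "skew_mult \<sigma> [:- c, 1:] (p + q) = skew_mult \<sigma> [:- c, 1:] p + skew_mult \<sigma> [:- c, 1:] q"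
    for p q by (simp add: skew_mult_linear_left[OF assms] map_poly_ring_aut_add[OF assms] smult_add_right)
  have const: "skew_mult \<sigma> [:- c, 1:] [:?e:] = skew_mult \<sigma> [:\<sigma> ?e:] [:- b, 1:] + [:\<sigma> ?e * b - c * ?e:]"
    by (simp add: skew_mult_linear_left[OF assms] skew_mult_const_left[OF assms]
        map_poly_ring_aut_const[OF assms])
  have "lin_prod \<sigma> (cs @ [c])
      = skew_mult \<sigma> (skew_mult \<sigma> [:- c, 1:] Q + [:\<sigma> ?e:]) [:- b, 1:] + [:skew_op \<sigma> b (cs @ [c]) 1:]"
    by (simp add: Q distrib const skew_mult_linear_assoc[OF assms] skew_mult_add_left[OF assms])
  then show ?case ..
qed

lemma skew_eval_lin_prod: "ring_aut \<sigma> \<Longrightarrow> skew_eval \<sigma> (lin_prod \<sigma> cs) b = skew_op \<sigma> b cs 1"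
  using lin_prod_division skew_eval_eqI by metis

section \<open>Twisted conjugation\<close>

lemma sconj_diff: "sconj \<sigma> b (x - y) = sconj \<sigma> b x - sconj \<sigma> b y"
  by (simp add: sconj_def algebra_simps)

lemma sconj_sconj:
  assumes "ring_aut \<sigma>" "b dvd 1" "e dvd 1"
  shows "sconj \<sigma> e (sconj \<sigma> b x) = sconj \<sigma> (e * b) x"
proof -
  have "unit_inv (e * b) = unit_inv b * unit_inv e"
    by (rule unit_inv_unique) (metis assms(2,3) mult.assoc mult.left_commute mult_1_right unit_inv)
  then show ?thesis by (simp add: sconj_def ring_aut_mult[OF assms(1)] algebra_simps)
qed

lemma sconj_unit_inv:
  assumes "ring_aut \<sigma>" "b dvd 1"
  shows "sconj \<sigma> b (sconj \<sigma> (unit_inv b) x) = x"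
  using sconj_sconj[OF assms(1) unit_inv_dvd_one[OF assms(2)] assms(2)] unit_inv[OF assms(2)]
    by (simp add: sconj_def ring_aut_one[OF assms(1)] unit_inv_one)

lemma sconj_dvd_one: "ring_aut \<sigma> \<Longrightarrow> b dvd 1 \<Longrightarrow> x dvd 1 \<Longrightarrow> sconj \<sigma> b x dvd 1"
  by (simp add: sconj_def dvd_one_mult ring_aut_unit unit_inv_dvd_one)

lemma unit_diff_sconj_sym:
  assumes "ring_aut \<sigma>" and cond: "\<And>b. b dvd 1 \<Longrightarrow> x - sconj \<sigma> b y dvd 1" and "b dvd 1"
  shows "y - sconj \<sigma> b x dvd 1"
proof -
  have "sconj \<sigma> b (x - sconj \<sigma> (unit_inv b) y) = sconj \<sigma> b x - y"
    by (simp add: sconj_diff sconj_unit_inv assms(1,3))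
  moreover have "sconj \<sigma> b (x - sconj \<sigma> (unit_inv b) y) dvd 1"
    by (intro sconj_dvd_one assms(1,3) cond unit_inv_dvd_one)
  ultimately show ?thesis by (metis minus_diff_eq minus_dvd_iff)
qed

lemma skew_op_sconj:
  assumes "ring_aut \<sigma>" "\<beta> dvd 1"
  shows "skew_op \<sigma> (sconj \<sigma> \<beta> a) cs y * \<beta> = skew_op \<sigma> a cs (y * \<beta>)"
proof (induction cs rule: rev_induct)
  case (snoc c cs)
  let ?z = "skew_op \<sigma> (sconj \<sigma> \<beta> a) cs y"
  have "skew_op \<sigma> (sconj \<sigma> \<beta> a) (cs @ [c]) y * \<beta>
      = \<sigma> (?z * \<beta>) * a * (\<beta> * unit_inv \<beta>) - c * (?z * \<beta>)"
    by (simp add: sconj_def ring_aut_mult[OF assms(1)] algebra_simps)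
  then show ?case by (simp add: unit_inv[OF assms(2)] snoc)
qed simp

section \<open>Linear independence over a subring\<close>

definition R_indep :: "'a::comm_ring_1 set \<Rightarrow> ('b \<Rightarrow> 'a) \<Rightarrow> 'b set \<Rightarrow> bool" where
  "R_indep R f V \<longleftrightarrow> (\<forall>c. (\<forall>v. c v \<in> R) \<and> (\<Sum>v\<in>V. c v * f v) = 0 \<longrightarrow> (\<forall>v\<in>V. c v = 0))"

lemma R_indep_torsion_free:
  assumes indep: "R_indep R f V" and "v \<in> V" "finite V" "0 \<in> R" "r \<in> R" "r * f v = 0"
  shows "r = 0"
proof -
  let ?c = "\<lambda>w. if w = v then r else 0"
  have "(\<Sum>w\<in>V. ?c w * f w) = (\<Sum>w\<in>V. if w = v then r * f w else 0)"
    by (rule sum.cong) auto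
  also have "\<dots> = 0" using assms(2,3,6) by simp
  finally have sum0: "(\<Sum>w\<in>V. ?c w * f w) = 0" .
  have "\<forall>w. ?c w \<in> R" using assms(4,5) by simp
  with sum0 have "\<forall>w\<in>V. ?c w = 0"
    using spec[OF indep[unfolded R_indep_def], of ?c] by blast
  then have "?c v = 0" using assms(2) by blast
  then show ?thesis by simp
qed

lemma R_indep_map_inj:
  assumes indep: "R_indep R f V"
    and lin: "\<And>c. \<forall>v. c v \<in> R \<Longrightarrow> T (\<Sum>v\<in>V. c v * f v) = (\<Sum>v\<in>V. c v * T (f v))"
    and inj: "\<And>y. T y = 0 \<Longrightarrow> y = 0"
  shows "R_indep R (\<lambda>v. T (f v)) V"
  unfolding R_indep_def
proof (intro allI impI)
  fix c assume c: "(\<forall>v. c v \<in> R) \<and> (\<Sum>v\<in>V. c v * T (f v)) = 0"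
  then have "T (\<Sum>v\<in>V. c v * f v) = 0" using lin[of c] by simp
  then have "(\<Sum>v\<in>V. c v * f v) = 0" by (rule inj)
  then show "\<forall>v\<in>V. c v = 0" using c indep unfolding R_indep_def by blast
qed

lemma R_indep_map_remove:
  assumes indep: "R_indep R f V" and "finite V" "w \<in> V" and minus: "\<And>r. r \<in> R \<Longrightarrow> - r \<in> R"
    and lin: "\<And>c. \<forall>v. c v \<in> R \<Longrightarrow> T (\<Sum>v\<in>V - {w}. c v * f v) = (\<Sum>v\<in>V - {w}. c v * T (f v))"
    and ker: "\<And>y. T y = 0 \<Longrightarrow> \<exists>r\<in>R. y = r * f w"
  shows "R_indep R (\<lambda>v. T (f v)) (V - {w})"
  unfolding R_indep_def
proof (intro allI impI ballI)
  fix c v assume c: "(\<forall>v. c v \<in> R) \<and> (\<Sum>v\<in>V - {w}. c v * T (f v)) = 0" and v: "v \<in> V - {w}"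
  then have "T (\<Sum>v\<in>V - {w}. c v * f v) = 0" using lin by simp
  then obtain r where r: "r \<in> R" "(\<Sum>v\<in>V - {w}. c v * f v) = r * f w" using ker by blast
  define c' where "c' = c(w := - r)"
  have "(\<Sum>u\<in>V. c' u * f u) = c' w * f w + (\<Sum>u\<in>V - {w}. c' u * f u)"
    using assms(2,3) by (rule sum.remove)
  also have "(\<Sum>u\<in>V - {w}. c' u * f u) = (\<Sum>u\<in>V - {w}. c u * f u)"
    by (rule sum.cong) (auto simp: c'_def)
  finally have "(\<Sum>u\<in>V. c' u * f u) = 0" using r(2) by (simp add: c'_def)
  moreover have "\<forall>u. c' u \<in> R" using c r(1) minus by (simp add: c'_def)
  ultimately have "c' v = 0" using indep v unfolding R_indep_def by blast
  then show "c v = 0" using v by (simp add: c'_def)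
qed

lemma mem_idx_pairs: "(u, v) \<in> set (idx_pairs n i j) \<longleftrightarrow>
   (1 \<le> u \<and> u < i \<and> 1 \<le> v \<and> v \<le> n u) \<or> (u = i \<and> 1 \<le> v \<and> v \<le> j)"
  unfolding idx_pairs_def by (auto simp del: upt_Suc) (rule bexI[of _ u], auto)

lemma length_idx_pairs: "length (idx_pairs n i j) = (\<Sum>u=1..<i. n u) + j"
proof -
  have "length (concat (map (\<lambda>u. map (\<lambda>v. (u, v)) [1..<n u + 1]) [1..<i])) = sum_list (map n [1..<i])"
    by (simp add: length_concat comp_def del: upt_Suc)
  also have "\<dots> = sum n {1..<i}" using sum_set_upt_conv_sum_list_nat[of n 1 i] by simp
  finally show ?thesis unfolding idx_pairs_def by (simp del: upt_Suc)
qed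

lemma distinct_idx_pairs: "distinct (idx_pairs n i j)"
proof -
  have "distinct (concat (map (\<lambda>u. map (\<lambda>v. (u, v)) (L u)) us))"
    if "distinct us" "\<And>u. distinct (L u)" for us and L :: "nat \<Rightarrow> nat list"
    using that by (induction us) (auto simp: distinct_map inj_on_def)
  then show ?thesis
    unfolding idx_pairs_def by (auto simp: distinct_map inj_on_def simp del: upt_Suc)
qed

lemma prefix_idx_pairs:
  assumes "1 \<le> i" "i \<le> l" "j \<le> n i"
  shows "prefix (idx_pairs n i j) (idx_pairs n l (n l))"
proof -
  let ?blk = "\<lambda>u. map (\<lambda>v. (u, v)) [1..<n u + 1]"
  have us: "[1..<l + 1] = [1..<i] @ i # [i + 1..<l + 1]"
    using assms upt_add_eq_append[of 1 i "l + 1 - i"] by (simp add: upt_conv_Cons)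
  have vs: "[1..<n i + 1] = [1..<j + 1] @ [j + 1..<n i + 1]"
    using assms upt_add_eq_append[of 1 "j + 1" "n i - j"] by simp
  have "idx_pairs n l (n l) = concat (map ?blk [1..<l + 1])"
    using assms by (simp add: idx_pairs_def)
  also have "\<dots> = concat (map ?blk [1..<i]) @ ?blk i @ concat (map ?blk [i + 1..<l + 1])"
    by (simp only: us) (simp del: upt_Suc)
  also have "\<dots> = idx_pairs n i j @ map (\<lambda>v. (i, v)) [j + 1..<n i + 1] @ concat (map ?blk [i + 1..<l + 1])"
    by (simp only: vs) (simp add: idx_pairs_def del: upt_Suc)
  finally show ?thesis by (rule prefixI)
qed

section \<open>The Galois ring S\<close>

locale galois_ring =
  fixes R :: "'a::comm_ring_1 set" and h :: "'a poly" and \<theta> :: 'a and \<sigma> :: "'a \<Rightarrow> 'a"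
  assumes setting: "galois_setting R h \<theta> \<sigma>"
begin

lemma aut: "ring_aut \<sigma>"
  and nontrivial: "(0::'a) \<noteq> 1"
  and finite_R: "finite R"
  and basis: "\<exists>!f. Rpoly R f \<and> degree f < degree h \<and> poly f \<theta> = s"
  and degree_h_pos: "0 < degree h"
  and galois: "ring_aut \<tau> \<Longrightarrow> \<forall>r\<in>R. \<tau> r = r \<Longrightarrow> \<exists>k. \<tau> = \<sigma> ^^ k"
  and frobenius: "\<sigma> y - y ^ res_card R \<in> ext_ideal R"
  using setting by (simp_all add: galois_setting_def irreducible_mod_def)

lemma sigma_fixed_iff: "\<sigma> x = x \<longleftrightarrow> x \<in> R"
  using setting unfolding galois_setting_def by blast

lemma sigma_R: "x \<in> R \<Longrightarrow> \<sigma> x = x"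
  using sigma_fixed_iff by blast

lemma zero_R: "0 \<in> R"
  and one_R: "1 \<in> R"
  and add_R: "x \<in> R \<Longrightarrow> y \<in> R \<Longrightarrow> x + y \<in> R"
  and mult_R: "x \<in> R \<Longrightarrow> y \<in> R \<Longrightarrow> x * y \<in> R"
  and minus_R: "x \<in> R \<Longrightarrow> - x \<in> R"
  using setting by (simp_all add: galois_setting_def chain_ring_def subring_of_def)

lemma power_R: "x \<in> R \<Longrightarrow> x ^ k \<in> R"
  by (induction k) (simp_all add: one_R mult_R)

lemma zero_max_ideal: "0 \<in> max_ideal R"
  using zero_R nontrivial by (simp add: max_ideal_def)

lemma R_dvd_total:
  assumes "x \<in> R" "y \<in> R"
  shows "(\<exists>s\<in>R. x = y * s) \<or> (\<exists>s\<in>R. y = x * s)"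
proof -
  have principal: "ideal_of R ((*) z ` R)" if "z \<in> R" for z
    unfolding ideal_of_def
  proof (intro conjI ballI)
    show "(*) z ` R \<subseteq> R" using that mult_R by auto
    show "0 \<in> (*) z ` R" using zero_R by (auto intro!: image_eqI[of _ _ 0])
    fix u v assume "u \<in> (*) z ` R" "v \<in> (*) z ` R"
    then obtain s t where "s \<in> R" "t \<in> R" "u + v = z * (s + t)"
      by (auto simp: distrib_left)
    then show "u + v \<in> (*) z ` R" using add_R by blast
  next
    fix r u assume "r \<in> R" "u \<in> (*) z ` R"
    then obtain s where "s \<in> R" "r * u = z * (r * s)"
      by (auto simp: mult.left_commute)
    then show "r * u \<in> (*) z ` R" using mult_R \<open>r \<in> R\<close> by blast
  qed
  have "(*) x ` R \<subseteq> (*) y ` R \<or> (*) y ` R \<subseteq> (*) x ` R"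
    using setting principal assms unfolding galois_setting_def chain_ring_def by blast
  moreover have "x \<in> (*) x ` R" "y \<in> (*) y ` R"
    using one_R by (auto intro!: image_eqI[of _ _ 1])
  ultimately show ?thesis by blast
qed

lemma exists_R_divisor_of_all:
  assumes "finite A" "A \<noteq> {}" "A \<subseteq> R"
  shows "\<exists>p\<in>A. \<forall>x\<in>A. \<exists>s\<in>R. x = p * s"
  using assms
proof (induction A rule: finite_ne_induct)
  case (singleton x)
  then show ?case using one_R by (auto intro!: bexI[of _ 1])
next
  case (insert x A)
  then obtain p where p: "p \<in> A" "\<forall>y\<in>A. \<exists>s\<in>R. y = p * s" by auto
  have "x \<in> R" "p \<in> R" using insert.prems p(1) by auto
  from R_dvd_total[OF this] show ?case
  proof
    assume "\<exists>s\<in>R. x = p * s"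
    then show ?thesis using p by auto
  next
    assume "\<exists>s\<in>R. p = x * s"
    then obtain s where s: "s \<in> R" "p = x * s" by auto
    have "\<exists>t\<in>R. y = x * t" if "y \<in> A" for y
    proof -
      obtain t where "t \<in> R" "y = p * t" using p(2) \<open>y \<in> A\<close> by blast
      then show ?thesis using s mult_R by (auto simp: mult.assoc)
    qed
    moreover have "x = x * 1" by simp
    ultimately show ?thesis using one_R by blast
  qed
qed

definition \<pi> :: 'a where
  "\<pi> = (SOME p. p \<in> max_ideal R \<and> (\<forall>x\<in>max_ideal R. \<exists>s\<in>R. x = p * s))"

lemma \<pi>_generates_max_ideal: "\<pi> \<in> max_ideal R" "x \<in> max_ideal R \<Longrightarrow> \<exists>s\<in>R. x = \<pi> * s"
proof -
  have "finite (max_ideal R)" "max_ideal R \<subseteq> R"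
    using finite_R by (auto simp: max_ideal_def intro: rev_finite_subset)
  then have "\<exists>p. p \<in> max_ideal R \<and> (\<forall>x\<in>max_ideal R. \<exists>s\<in>R. x = p * s)"
    using exists_R_divisor_of_all[of "max_ideal R"] zero_max_ideal by blast
  then have "\<pi> \<in> max_ideal R \<and> (\<forall>x\<in>max_ideal R. \<exists>s\<in>R. x = \<pi> * s)"
    unfolding \<pi>_def by (rule someI_ex)
  then show "\<pi> \<in> max_ideal R" "x \<in> max_ideal R \<Longrightarrow> \<exists>s\<in>R. x = \<pi> * s" by auto
qed

lemma \<pi>_R: "\<pi> \<in> R"
  using \<pi>_generates_max_ideal(1) by (simp add: max_ideal_def)

lemma max_ideal_iff: "x \<in> max_ideal R \<longleftrightarrow> (\<exists>s\<in>R. x = \<pi> * s)"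
proof
  assume "\<exists>s\<in>R. x = \<pi> * s"
  then obtain s where s: "s \<in> R" "x = \<pi> * s" by blast
  have "\<not> (\<exists>u\<in>R. x * u = 1)"
    using \<pi>_generates_max_ideal(1) s mult_R by (auto simp: max_ideal_def mult.assoc)
  then show "x \<in> max_ideal R" using s mult_R \<pi>_R by (simp add: max_ideal_def)
qed (rule \<pi>_generates_max_ideal(2))

lemma one_minus_\<pi>_mult_R_unit:
  assumes "z \<in> R"
  shows "\<exists>u\<in>R. (1 - \<pi> * z) * u = 1"
proof -
  have "1 - \<pi> * z \<notin> max_ideal R"
  proof
    assume "1 - \<pi> * z \<in> max_ideal R"
    then obtain s where s: "s \<in> R" "1 - \<pi> * z = \<pi> * s" using max_ideal_iff by blast
    then have "\<pi> * (s + z) = 1" by (simp add: distrib_left diff_eq_eq)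
    moreover have "s + z \<in> R" using add_R[OF s(1) assms] .
    ultimately show False using \<pi>_generates_max_ideal(1) by (auto simp: max_ideal_def)
  qed
  moreover have "1 - \<pi> * z \<in> R"
    using add_R[OF one_R minus_R[OF mult_R[OF \<pi>_R assms]]] by simp
  ultimately show ?thesis unfolding max_ideal_def by blast
qed

lemma \<pi>_nilpotent: "\<exists>k. \<pi> ^ k = 0"
proof -
  have "finite (range (\<lambda>k::nat. \<pi> ^ k))"
    by (rule finite_subset[OF _ finite_R]) (auto simp: power_R \<pi>_R)
  then have "\<not> inj (\<lambda>k::nat. \<pi> ^ k)"
    using range_inj_infinite by blast
  then obtain i' j' :: nat where ij': "i' \<noteq> j'" "\<pi> ^ i' = \<pi> ^ j'"
    unfolding inj_def by blast
  obtain i j :: nat where ij: "i < j" "\<pi> ^ i = \<pi> ^ j"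
  proof (cases "i' < j'")
    case True
    then show ?thesis using that ij' by blast
  next
    case False
    then show ?thesis using that[of j' i'] ij' by simp
  qed
  define d where "d = j - Suc i"
  have d: "j = i + Suc d" using ij(1) by (simp add: d_def)
  obtain u where u: "(1 - \<pi> * \<pi> ^ d) * u = 1"
    using one_minus_\<pi>_mult_R_unit[OF power_R[OF \<pi>_R]] by blast
  have "\<pi> ^ i * (1 - \<pi> * \<pi> ^ d) = \<pi> ^ i - \<pi> ^ j"
    unfolding d by (simp add: power_add right_diff_distrib)
  then have "\<pi> ^ i * (1 - \<pi> * \<pi> ^ d) * u = 0" using ij(2) by simp
  then have "\<pi> ^ i = 0" by (simp only: mult.assoc u mult_1_right)
  then show ?thesis ..
qed

definition nil_index :: nat where
  "nil_index = (LEAST k. \<pi> ^ k = 0)"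

definition \<omega> :: 'a where
  "\<omega> = \<pi> ^ (nil_index - 1)"

lemma \<pi>_power_nil_index: "\<pi> ^ nil_index = 0"
  unfolding nil_index_def using \<pi>_nilpotent by (rule LeastI_ex)

lemma nil_index_pos: "0 < nil_index"
  using \<pi>_power_nil_index nontrivial by (cases nil_index) auto

lemma \<omega>_R: "\<omega> \<in> R"
  unfolding \<omega>_def by (rule power_R[OF \<pi>_R])

lemma \<omega>_nonzero: "\<omega> \<noteq> 0"
  unfolding \<omega>_def nil_index_def
  using not_less_Least[of "nil_index - 1" "\<lambda>k. \<pi> ^ k = 0"] nil_index_pos
  by (simp add: nil_index_def)

lemma \<omega>_mult_\<pi>: "\<omega> * \<pi> = 0"
  using \<pi>_power_nil_index nil_index_pos unfolding \<omega>_def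
  by (metis Suc_diff_1 power_Suc2)

lemma max_ideal_if_\<omega>_mult:
  assumes "x \<in> R" "\<omega> * x = 0"
  shows "x \<in> max_ideal R"
proof (rule ccontr)
  assume "x \<notin> max_ideal R"
  then obtain u where "x * u = 1" using assms(1) by (auto simp: max_ideal_def)
  then have "\<omega> = \<omega> * x * u" by (simp add: mult.assoc)
  then show False using assms(2) \<omega>_nonzero by simp
qed

lemma \<pi>_dvd_sigma: "\<pi> dvd y \<Longrightarrow> \<pi> dvd \<sigma> y"
  by (auto elim!: dvdE simp: ring_aut_mult[OF aut] sigma_R[OF \<pi>_R])

lemma \<pi>_dvd_if_max_ideal: "x \<in> max_ideal R \<Longrightarrow> \<pi> dvd x"
  by (auto simp: max_ideal_iff)

lemma \<pi>_dvd_frobenius: "\<pi> dvd (\<sigma> y - y ^ res_card R)"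
proof -
  obtain n :: nat and f g :: "nat \<Rightarrow> 'a"
    where "\<forall>i<n. f i \<in> max_ideal R" "\<sigma> y - y ^ res_card R = (\<Sum>i<n. f i * g i)"
    using frobenius[of y] unfolding ext_ideal_def mem_Collect_eq by blast
  then show ?thesis by (auto intro!: dvd_sum dvd_mult2[OF \<pi>_dvd_if_max_ideal])
qed

lemma nilpotent_if_\<pi>_dvd: "\<pi> dvd y \<Longrightarrow> y ^ nil_index = 0"
  by (auto elim!: dvdE simp: power_mult_distrib \<pi>_power_nil_index)

lemma not_unit_if_\<pi>_dvd: "\<pi> dvd y \<Longrightarrow> \<not> y dvd 1"
  using nilpotent_if_\<pi>_dvd[of y] dvd_power_same[of y 1 nil_index] nontrivial by force

lemma max_ideal_if_\<pi>_dvd: "x \<in> R \<Longrightarrow> \<pi> dvd x \<Longrightarrow> x \<in> max_ideal R"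
  by (auto elim!: dvdE intro!: max_ideal_if_\<omega>_mult simp: mult.assoc[symmetric] \<omega>_mult_\<pi>)

lemma \<pi>_dvd_poly: "(\<And>k. coeff p k \<in> max_ideal R) \<Longrightarrow> \<pi> dvd poly p \<theta>"
  unfolding poly_altdef by (auto intro!: dvd_sum dvd_mult2[OF \<pi>_dvd_if_max_ideal])

text \<open>Multiplying by \<omega> kills \<pi>, so \<omega> y is fixed by \<sigma> and lies in R; comparing
  R-coordinates in the basis given by h shows that \<omega> annihilates every coordinate of y but the
  constant one.\<close>

lemma lift_mod_\<pi>:
  assumes "\<pi> dvd (\<sigma> y - y)"
  shows "\<exists>r\<in>R. \<pi> dvd (y - r)"
proof -
  have "\<omega> * (\<sigma> y - y) = 0"
    using assms \<omega>_mult_\<pi> by (auto elim!: dvdE simp: mult.assoc[symmetric])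
  then have "\<sigma> (\<omega> * y) = \<omega> * y"
    by (simp add: ring_aut_mult[OF aut] sigma_R[OF \<omega>_R] right_diff_distrib)
  then have \<omega>y: "\<omega> * y \<in> R" using sigma_fixed_iff by blast
  obtain f where f: "Rpoly R f" "degree f < degree h" "poly f \<theta> = y"
    using basis[of y] by blast
  have "Rpoly R (smult \<omega> f)" "degree (smult \<omega> f) < degree h" "poly (smult \<omega> f) \<theta> = \<omega> * y"
    using f \<omega>_R mult_R degree_smult_le[of \<omega> f] by (auto simp: Rpoly_def)
  moreover have "Rpoly R [:\<omega> * y:]" "degree [:\<omega> * y:] < degree h" "poly [:\<omega> * y:] \<theta> = \<omega> * y"
    using \<omega>y zero_R degree_h_pos by (auto simp: Rpoly_def coeff_pCons split: nat.splits)
  ultimately have smult_eq: "smult \<omega> f = [:\<omega> * y:]"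
    using basis[of "\<omega> * y"] by blast
  have "coeff f k \<in> max_ideal R" if "k > 0" for k
  proof (rule max_ideal_if_\<omega>_mult)
    show "coeff f k \<in> R" using f(1) by (simp add: Rpoly_def)
    have "coeff (smult \<omega> f) k = coeff [:\<omega> * y:] k" by (simp only: smult_eq)
    then show "\<omega> * coeff f k = 0" using that by (cases k) simp_all
  qed
  then have "\<pi> dvd poly (f - [:coeff f 0:]) \<theta>"
    by (intro \<pi>_dvd_poly) (auto simp: zero_max_ideal coeff_pCons split: nat.splits)
  moreover have "coeff f 0 \<in> R" using f(1) by (simp add: Rpoly_def)
  ultimately show ?thesis using f(3) by auto
qed

lemma unit_if_\<pi>_dvd_diff:
  assumes "\<pi> dvd (y - r)" "r \<in> R" "r \<notin> max_ideal R"
  shows "y dvd 1"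
proof -
  obtain u where u: "r * u = 1" using assms(2,3) by (auto simp: max_ideal_def)
  have "y * u = 1 - (r - y) * u" using u by (simp add: algebra_simps)
  moreover have "\<pi> dvd ((r - y) * u)"
    using assms(1) by (metis dvd_minus_iff dvd_mult2 minus_diff_eq)
  ultimately have "y * u dvd 1"
    using one_minus_nilpotent_dvd_one nilpotent_if_\<pi>_dvd by metis
  then show ?thesis by (rule dvd_mult_left)
qed

lemma sigma_finite_order: "\<exists>e>0. \<sigma> ^^ e = id"
proof -
  have bij: "bij \<sigma>" using aut by (simp add: ring_aut_def)
  define \<tau> where "\<tau> = inv \<sigma>"
  have \<sigma>\<tau>: "\<sigma> (\<tau> x) = x" for x
    using bij by (simp add: \<tau>_def bij_def surj_f_inv_f)
  have \<tau>\<sigma>: "\<tau> (\<sigma> x) = x" for x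
    using bij by (simp add: \<tau>_def bij_def)
  have "ring_aut \<tau>"
    unfolding ring_aut_def
  proof (intro conjI allI)
    show "bij \<tau>" unfolding \<tau>_def by (rule bij_imp_bij_inv[OF bij])
    show "\<tau> 1 = 1" using \<tau>\<sigma>[of 1] by (simp add: ring_aut_one[OF aut])
    fix x y
    show "\<tau> (x + y) = \<tau> x + \<tau> y"
      using \<tau>\<sigma>[of "\<tau> x + \<tau> y"] by (simp add: ring_aut_add[OF aut] \<sigma>\<tau>)
    show "\<tau> (x * y) = \<tau> x * \<tau> y"
      using \<tau>\<sigma>[of "\<tau> x * \<tau> y"] by (simp add: ring_aut_mult[OF aut] \<sigma>\<tau>)
  qed
  moreover have "\<forall>r\<in>R. \<tau> r = r" using \<tau>\<sigma> sigma_R by metis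
  ultimately obtain k where k: "\<tau> = \<sigma> ^^ k" using galois by blast
  have "\<sigma> ^^ Suc k = id"
    by (rule ext) (simp add: k[symmetric] \<sigma>\<tau>)
  then show ?thesis by blast
qed

lemma \<pi>_dvd_frobenius_funpow: "\<pi> dvd ((\<sigma> ^^ k) y - y ^ (res_card R ^ k))"
proof (induction k)
  case (Suc k)
  let ?q = "res_card R"
  have "\<pi> dvd (\<sigma> ((\<sigma> ^^ k) y) - \<sigma> (y ^ (?q ^ k)))"
    using \<pi>_dvd_sigma[OF Suc.IH] by (simp add: ring_aut_diff[OF aut])
  moreover have "\<pi> dvd (\<sigma> (y ^ (?q ^ k)) - (y ^ (?q ^ k)) ^ ?q)"
    by (rule \<pi>_dvd_frobenius)
  ultimately have "\<pi> dvd (\<sigma> ((\<sigma> ^^ k) y) - \<sigma> (y ^ (?q ^ k))) + (\<sigma> (y ^ (?q ^ k)) - (y ^ (?q ^ k)) ^ ?q)"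
    by (rule dvd_add)
  then show ?case by (simp add: power_mult[symmetric] mult.commute)
qed simp

lemma res_card_nonzero: "res_card R \<noteq> 0"
proof
  assume "res_card R = 0"
  then have "\<pi> dvd 1" using \<pi>_dvd_frobenius[of 0] by (simp add: ring_aut_zero[OF aut])
  then show False using not_unit_if_\<pi>_dvd[of \<pi>] by simp
qed

lemma frobenius_period: "\<exists>Q \<ge> res_card R. \<forall>y. \<pi> dvd (y ^ Q - y)"
proof -
  obtain e where e: "e > 0" "\<sigma> ^^ e = id" using sigma_finite_order by blast
  have "\<pi> dvd (y ^ (res_card R ^ e) - y)" for y
  proof -
    have "\<pi> dvd (y - y ^ (res_card R ^ e))"
      using \<pi>_dvd_frobenius_funpow[of e y] e(2) by simp
    then show ?thesis by (metis dvd_minus_iff minus_diff_eq)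
  qed
  moreover have "res_card R \<le> res_card R ^ e"
    using res_card_nonzero e(1) by (intro self_le_power) auto
  ultimately show ?thesis by blast
qed

lemma sigma_fixed_mod_\<pi>_if_idempotent:
  assumes idem: "\<pi> dvd (E * E - E)"
  shows "\<pi> dvd (\<sigma> E - E)"
proof -
  have powers: "\<pi> dvd (E ^ Suc k - E)" for k
  proof (induction k)
    case (Suc k)
    have eq: "E ^ Suc (Suc k) - E = E * (E ^ Suc k - E) + (E * E - E)" by (simp add: algebra_simps)
    show ?case unfolding eq by (rule dvd_add[OF dvd_mult[OF Suc.IH] idem])
  qed simp
  define q where "q = res_card R"
  have "\<pi> dvd (\<sigma> E - E ^ q) + (E ^ Suc (q - 1) - E)"
    using \<pi>_dvd_frobenius[of E] powers[of "q - 1"] by (simp add: q_def dvd_add)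
  then show ?thesis using res_card_nonzero by (simp add: q_def)
qed

text \<open>For q = 1 take E = y; otherwise y \<equiv> y ^ Q modulo \<pi> for some Q \<ge> 2, and
  E = y ^ (Q - 1) is idempotent modulo \<pi>.\<close>

lemma exists_sigma_fixed_mod_\<pi>:
  "\<exists>E. \<pi> dvd (\<sigma> E - E) \<and> (\<pi> dvd E \<longrightarrow> \<pi> dvd y) \<and> (E dvd 1 \<longrightarrow> y dvd 1)"
proof (cases "res_card R = 1")
  case True
  then show ?thesis using \<pi>_dvd_frobenius[of y] by (intro exI[of _ y]) simp
next
  case False
  obtain Q where Q: "res_card R \<le> Q" "\<And>y. \<pi> dvd (y ^ Q - y)" using frobenius_period by blast
  define m where "m = Q - 2"
  have m: "Q = Suc (Suc m)" using Q(1) False res_card_nonzero by (simp add: m_def)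
  define E where "E = y ^ Suc m"
  have "E * E - E = y ^ m * (y ^ Q - y)"
    by (simp add: E_def m right_diff_distrib power_add[symmetric] mult.assoc mult.left_commute)
  then have "\<pi> dvd (E * E - E)" using Q(2)[of y] by simp
  then have "\<pi> dvd (\<sigma> E - E)" by (rule sigma_fixed_mod_\<pi>_if_idempotent)
  moreover have "\<pi> dvd y" if "\<pi> dvd E"
  proof -
    have "y = y * E - (y ^ Q - y)" by (simp add: E_def m)
    then show ?thesis using that Q(2)[of y] by (metis dvd_diff dvd_mult)
  qed
  moreover have "y dvd 1" if "E dvd 1" using that by (auto simp: E_def intro: dvd_mult_left)
  ultimately show ?thesis by blast
qed

lemma unit_if_not_\<pi>_dvd:
  assumes "\<not> \<pi> dvd y"
  shows "y dvd 1"
proof -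
  obtain E where E: "\<pi> dvd (\<sigma> E - E)" "\<pi> dvd E \<Longrightarrow> \<pi> dvd y" "E dvd 1 \<Longrightarrow> y dvd 1"
    using exists_sigma_fixed_mod_\<pi> by blast
  obtain r where r: "r \<in> R" "\<pi> dvd (E - r)" using lift_mod_\<pi>[OF E(1)] by blast
  have "r \<notin> max_ideal R"
  proof
    assume "r \<in> max_ideal R"
    then have "\<pi> dvd (E - r) + r" by (rule dvd_add[OF r(2) \<pi>_dvd_if_max_ideal])
    then show False using E(2) assms by simp
  qed
  then show ?thesis using E(3) unit_if_\<pi>_dvd_diff r by blast
qed

lemma unit_factorization_or_\<pi>_power_dvd: "(\<exists>r\<in>R. \<exists>z. z dvd 1 \<and> y = r * z) \<or> \<pi> ^ k dvd y"
proof (induction k)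
  case 0
  show ?case by simp
next
  case (Suc k)
  show ?case
  proof (cases "\<exists>r\<in>R. \<exists>z. z dvd 1 \<and> y = r * z")
    case True
    then show ?thesis ..
  next
    case False
    with Suc.IH have "\<pi> ^ k dvd y" by blast
    then obtain w where w: "y = \<pi> ^ k * w" by (rule dvdE)
    show ?thesis
    proof (cases "\<pi> dvd w")
      case True
      then have "\<pi> ^ k * \<pi> dvd y" unfolding w by (rule mult_dvd_mono[OF dvd_refl])
      then have "\<pi> ^ Suc k dvd y" by (simp only: power_Suc2)
      then show ?thesis by (rule disjI2)
    next
      case False
      then have "w dvd 1" by (rule unit_if_not_\<pi>_dvd)
      then show ?thesis using w power_R[OF \<pi>_R, of k] by blast
    qed
  qed
qed

lemma unit_factorization: "\<exists>r\<in>R. \<exists>z. z dvd 1 \<and> y = r * z"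
proof (cases "\<pi> ^ nil_index dvd y")
  case True
  then have "y = 0" by (simp add: \<pi>_power_nil_index)
  then show ?thesis by (intro bexI[OF _ zero_R] exI[of _ 1]) simp
next
  case False
  then show ?thesis using unit_factorization_or_\<pi>_power_dvd[of y nil_index] by blast
qed

lemma unit_if_R_torsion_free:
  assumes "\<And>r. r \<in> R \<Longrightarrow> r * y = 0 \<Longrightarrow> r = 0"
  shows "y dvd 1"
proof (rule ccontr)
  assume "\<not> y dvd 1"
  then have "\<pi> dvd y" using unit_if_not_\<pi>_dvd by blast
  then obtain z where "y = \<pi> * z" by (rule dvdE)
  then have "\<omega> * y = 0" using \<omega>_mult_\<pi> by (simp add: mult.assoc[symmetric])
  then show False using assms[OF \<omega>_R] \<omega>_nonzero by blast
qed

lemma twist_sum: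
  assumes "\<forall>v. c v \<in> R"
  shows "\<sigma> (\<Sum>v\<in>V. c v * y v) * a - b * (\<Sum>v\<in>V. c v * y v) = (\<Sum>v\<in>V. c v * (\<sigma> (y v) * a - b * y v))"
proof -
  have "\<sigma> (\<Sum>v\<in>V. c v * y v) = (\<Sum>v\<in>V. c v * \<sigma> (y v))"
    using assms by (simp add: ring_aut_sum[OF aut] ring_aut_mult[OF aut] sigma_R)
  then show ?thesis by (simp add: sum_distrib_left sum_distrib_right sum_subtractf algebra_simps)
qed

lemma twist_kernel_same:
  assumes g: "g dvd 1" and a: "a dvd 1" and y: "\<sigma> y * a - sconj \<sigma> g a * y = 0"
  shows "\<exists>r\<in>R. y = r * g"
proof -
  let ?g' = "unit_inv g"
  from y have eq: "\<sigma> y * a = sconj \<sigma> g a * y" by simp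
  have "\<sigma> y = \<sigma> y * (a * unit_inv a)" by (simp add: unit_inv[OF a])
  also have "\<dots> = sconj \<sigma> g a * y * unit_inv a" by (simp add: eq mult.assoc[symmetric])
  also have "\<dots> = \<sigma> g * ?g' * y * (a * unit_inv a)" by (simp add: sconj_def ac_simps)
  also have "\<dots> = \<sigma> g * ?g' * y" by (simp add: unit_inv[OF a])
  finally have \<sigma>y: "\<sigma> y = \<sigma> g * ?g' * y" .
  have inv: "\<sigma> g * \<sigma> ?g' = 1"
    using unit_inv[OF g] by (metis ring_aut_mult[OF aut] ring_aut_one[OF aut])
  have "\<sigma> (y * ?g') = (\<sigma> g * \<sigma> ?g') * (?g' * y)"
    by (simp add: \<sigma>y ring_aut_mult[OF aut] ac_simps)
  also have "\<dots> = y * ?g'" by (simp add: inv mult.commute)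
  finally have "y * ?g' \<in> R" using sigma_fixed_iff by blast
  moreover have "y = y * ?g' * g"
    using unit_inv[OF g] by (simp add: mult.assoc mult.commute[of ?g'])
  ultimately show ?thesis by blast
qed

lemma twist_kernel_other:
  assumes g: "g dvd 1" and cond: "\<And>b. b dvd 1 \<Longrightarrow> a - sconj \<sigma> b a' dvd 1"
    and y: "\<sigma> y * a' - sconj \<sigma> g a * y = 0"
  shows "y = 0"
proof -
  obtain r z where r: "r \<in> R" and z: "z dvd 1" and yrz: "y = r * z"
    using unit_factorization by blast
  define d where "d = z * unit_inv g"
  have d: "d dvd 1" using z unit_inv_dvd_one[OF g] by (simp add: d_def dvd_one_mult)
  have "z = z * (g * unit_inv g)" by (simp add: unit_inv[OF g])
  then have zdg: "z = d * g" by (simp add: d_def ac_simps)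
  have "sconj \<sigma> g a * z = \<sigma> g * a * d * (g * unit_inv g)"
    by (simp add: sconj_def zdg ac_simps)
  also have "\<dots> = \<sigma> g * a * d" by (simp add: unit_inv[OF g])
  finally have 1: "sconj \<sigma> g a * z = \<sigma> g * a * d" .
  have "\<sigma> g * d * sconj \<sigma> d a' = \<sigma> d * \<sigma> g * a' * (d * unit_inv d)"
    by (simp add: sconj_def ac_simps)
  also have "\<dots> = \<sigma> d * \<sigma> g * a'" by (simp add: unit_inv[OF d])
  finally have 2: "\<sigma> g * d * sconj \<sigma> d a' = \<sigma> d * \<sigma> g * a'" .
  have "- (\<sigma> g * d * (a - sconj \<sigma> d a')) = \<sigma> g * d * sconj \<sigma> d a' - \<sigma> g * d * a"
    by (simp add: right_diff_distrib)
  also have "\<dots> = \<sigma> d * \<sigma> g * a' - \<sigma> g * a * d"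
    by (simp only: 2) (simp add: ac_simps)
  also have "\<dots> = \<sigma> z * a' - sconj \<sigma> g a * z"
    by (simp only: 1) (simp add: zdg ring_aut_mult[OF aut])
  finally have "\<sigma> z * a' - sconj \<sigma> g a * z = - (\<sigma> g * d * (a - sconj \<sigma> d a'))" ..
  moreover have "\<sigma> g * d * (a - sconj \<sigma> d a') dvd 1"
    using ring_aut_unit[OF aut g] d cond[OF d] by (simp add: dvd_one_mult)
  ultimately have "\<sigma> z * a' - sconj \<sigma> g a * z dvd 1" by simp
  then obtain u where u: "1 = (\<sigma> z * a' - sconj \<sigma> g a * z) * u" by (rule dvdE)
  have "\<sigma> y * a' - sconj \<sigma> g a * y = r * (\<sigma> z * a' - sconj \<sigma> g a * z)"
    by (simp add: yrz ring_aut_mult[OF aut] sigma_R[OF r] algebra_simps)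
  with y have "r * (\<sigma> z * a' - sconj \<sigma> g a * z) = 0" by simp
  then have "r = 0" by (metis u mult.assoc mult_1_right mult_zero_left)
  then show ?thesis by (simp add: yrz)
qed

end

section \<open>Greedy interpolation\<close>

locale skew_interpolation = galois_ring +
  fixes l :: nat and n :: "nat \<Rightarrow> nat" and a :: "nat \<Rightarrow> 'a" and \<beta> :: "nat \<Rightarrow> nat \<Rightarrow> 'a"
  assumes a_units: "\<forall>i\<in>{1..l}. is_unit_S (a i)"
    and cond_i: "\<forall>b. is_unit_S b \<longrightarrow>
                   (\<forall>i j. 1 \<le> i \<and> i < j \<and> j \<le> l \<longrightarrow> is_unit_S (a i - sconj \<sigma> b (a j)))"
    and cond_ii: "\<forall>i\<in>{1..l}. \<forall>c. (\<forall>v. c v \<in> R) \<and> (\<Sum>v=1..n i. c v * \<beta> i v) = 0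
                     \<longrightarrow> (\<forall>v\<in>{1..n i}. c v = 0)"
begin

definition points :: "(nat \<times> nat) set" where
  "points = (SIGMA u:{1..l}. {1..n u})"

definition adapted :: "'a list \<Rightarrow> (nat \<times> nat) set \<Rightarrow> bool" where
  "adapted cs P \<longleftrightarrow> (\<forall>(u, v)\<in>P. skew_op \<sigma> (a u) cs (\<beta> u v) = 0) \<and>
     (\<forall>u\<in>{1..l}. R_indep R (\<lambda>v. skew_op \<sigma> (a u) cs (\<beta> u v)) ({1..n u} - {v. (u, v) \<in> P}))"

definition conjs :: "(nat \<times> nat \<Rightarrow> 'a) \<Rightarrow> (nat \<times> nat) list \<Rightarrow> 'a list" where
  "conjs \<gamma> ps = map (\<lambda>(u, v). sconj \<sigma> (\<gamma> (u, v)) (a u)) ps"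

lemma G_poly_eq_lin_prod: "G_poly \<sigma> a (curry \<gamma>) n i j = lin_prod \<sigma> (conjs \<gamma> (idx_pairs n i j))"
  by (simp add: G_poly_def lin_prod_def conjs_def rev_map comp_def case_prod_beta')

lemma conjs_fun_upd: "p \<notin> set qs \<Longrightarrow> conjs (\<gamma>(p := g)) qs = conjs \<gamma> qs"
  unfolding conjs_def by (auto intro!: map_cong)

lemma conjs_snoc: "conjs \<gamma> (qs @ [(u, v)]) = conjs \<gamma> qs @ [sconj \<sigma> (\<gamma> (u, v)) (a u)]"
  by (simp add: conjs_def)

lemma a_unit: "u \<in> {1..l} \<Longrightarrow> a u dvd 1"
  using a_units by (simp add: is_unit_S_iff)

lemma a_sconj_distinct:
  assumes "i \<in> {1..l}" "u \<in> {1..l}" "i \<noteq> u" "b dvd 1"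
  shows "a i - sconj \<sigma> b (a u) dvd 1"
proof (cases "i < u")
  case True
  then show ?thesis using cond_i assms by (simp add: is_unit_S_iff)
next
  case False
  then have "\<And>b. b dvd 1 \<Longrightarrow> a u - sconj \<sigma> b (a i) dvd 1"
    using cond_i assms by (simp add: is_unit_S_iff)
  then show ?thesis by (rule unit_diff_sconj_sym[OF aut _ assms(4)])
qed

lemma adapted_Nil: "adapted [] {}"
  using cond_ii by (simp add: adapted_def R_indep_def)

lemma unit_if_adapted:
  assumes "adapted cs P" "(u, v) \<in> points - P"
  shows "skew_op \<sigma> (a u) cs (\<beta> u v) dvd 1"
proof (rule unit_if_R_torsion_free)
  let ?f = "\<lambda>v. skew_op \<sigma> (a u) cs (\<beta> u v)"
  let ?V = "{1..n u} - {v. (u, v) \<in> P}"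
  fix r assume r: "r \<in> R" "r * ?f v = 0"
  have "R_indep R ?f ?V" using assms by (auto simp: adapted_def points_def)
  moreover have "v \<in> ?V" using assms(2) by (auto simp: points_def)
  ultimately show "r = 0" using R_indep_torsion_free[of R ?f ?V v r] zero_R r by simp
qed

lemma beta_unit: "(u, v) \<in> points \<Longrightarrow> \<beta> u v dvd 1"
  using unit_if_adapted[OF adapted_Nil] by simp

lemma R_indep_factor_same_block:
  assumes old: "R_indep R (\<lambda>v. skew_op \<sigma> (a i) cs (\<beta> i v)) V" and "finite V" "w \<in> V"
    and i: "i \<in> {1..l}" and g: "g = skew_op \<sigma> (a i) cs (\<beta> i w)" "g dvd 1"
  shows "R_indep R (\<lambda>v. skew_op \<sigma> (a i) (cs @ [sconj \<sigma> g (a i)]) (\<beta> i v)) (V - {w})"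
proof -
  let ?T = "\<lambda>y. \<sigma> y * a i - sconj \<sigma> g (a i) * y"
  have ker: "\<exists>r\<in>R. y = r * skew_op \<sigma> (a i) cs (\<beta> i w)" if "?T y = 0" for y
    using twist_kernel_same[OF g(2) a_unit[OF i] that] g(1) by simp
  show ?thesis
    using R_indep_map_remove[where T = ?T, OF old assms(2,3) minus_R twist_sum ker] by simp
qed

lemma R_indep_factor_other_block:
  assumes old: "R_indep R (\<lambda>v. skew_op \<sigma> (a u) cs (\<beta> u v)) V"
    and "u \<in> {1..l}" "i \<in> {1..l}" "u \<noteq> i" and g: "g dvd 1"
  shows "R_indep R (\<lambda>v. skew_op \<sigma> (a u) (cs @ [sconj \<sigma> g (a i)]) (\<beta> u v)) V"
proof -
  let ?T = "\<lambda>y. \<sigma> y * a u - sconj \<sigma> g (a i) * y"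
  have inj: "y = 0" if "?T y = 0" for y
    using twist_kernel_other[OF g a_sconj_distinct that] assms(2-4) by simp
  show ?thesis
    using R_indep_map_inj[where T = ?T, OF old twist_sum inj] by simp
qed

text \<open>The new factor kills the point (i, w); on block i its kernel is spanned by the image of
  \<beta> i w, and on every other block it is injective by condition (i).\<close>

lemma adapted_snoc:
  assumes P: "adapted cs P" and new: "(i, w) \<in> points - P"
  defines "g \<equiv> skew_op \<sigma> (a i) cs (\<beta> i w)"
  shows "adapted (cs @ [sconj \<sigma> g (a i)]) (insert (i, w) P)"
proof -
  let ?c = "sconj \<sigma> g (a i)"
  have g: "g dvd 1" unfolding g_def using unit_if_adapted[OF P new] .
  have i: "i \<in> {1..l}" using new by (auto simp: points_def)
  have "skew_op \<sigma> (a u) (cs @ [?c]) (\<beta> u v) = 0" if "(u, v) \<in> insert (i, w) P" for u v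
  proof (cases "(u, v) = (i, w)")
    case True
    have "\<sigma> g * a i - ?c * g = \<sigma> g * a i * (1 - g * unit_inv g)"
      by (simp add: sconj_def algebra_simps)
    then show ?thesis using True by (simp add: g_def[symmetric] unit_inv[OF g])
  next
    case False
    then have "skew_op \<sigma> (a u) cs (\<beta> u v) = 0" using that P by (auto simp: adapted_def)
    then show ?thesis by (simp add: ring_aut_zero[OF aut])
  qed
  then have "\<forall>(u, v)\<in>insert (i, w) P. skew_op \<sigma> (a u) (cs @ [?c]) (\<beta> u v) = 0"
    by blast
  moreover have "R_indep R (\<lambda>v. skew_op \<sigma> (a u) (cs @ [?c]) (\<beta> u v))
      ({1..n u} - {v. (u, v) \<in> insert (i, w) P})" if u: "u \<in> {1..l}" for u
  proof -
    have old: "R_indep R (\<lambda>v. skew_op \<sigma> (a u) cs (\<beta> u v)) ({1..n u} - {v. (u, v) \<in> P})"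
      using P u by (simp add: adapted_def)
    show ?thesis
    proof (cases "u = i")
      case True
      have w: "w \<in> {1..n i} - {v. (i, v) \<in> P}" using new by (auto simp: points_def)
      have eq: "{1..n i} - {v. (i, v) \<in> insert (i, w) P} = ({1..n i} - {v. (i, v) \<in> P}) - {w}"
        by auto
      show ?thesis unfolding True eq
        by (rule R_indep_factor_same_block[OF old[unfolded True] _ w i meta_eq_to_obj_eq[OF g_def] g])
          simp
    next
      case False
      from R_indep_factor_other_block[OF old u i False g] show ?thesis using False by simp
    qed
  qed
  ultimately show ?thesis unfolding adapted_def by blast
qed

lemma skew_eval_if_adapted:
  assumes P: "adapted cs P" and uv: "(u, v) \<in> points"
  shows "((u, v) \<in> P \<longrightarrow> skew_eval \<sigma> (lin_prod \<sigma> cs) (sconj \<sigma> (\<beta> u v) (a u)) = 0) \<and>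
    ((u, v) \<notin> P \<longrightarrow> skew_eval \<sigma> (lin_prod \<sigma> cs) (sconj \<sigma> (\<beta> u v) (a u)) dvd 1)"
proof -
  let ?e = "skew_eval \<sigma> (lin_prod \<sigma> cs) (sconj \<sigma> (\<beta> u v) (a u))"
  have \<beta>: "\<beta> u v dvd 1" by (rule beta_unit[OF uv])
  have e: "?e * \<beta> u v = skew_op \<sigma> (a u) cs (\<beta> u v)"
    using skew_op_sconj[OF aut \<beta>, of "a u" cs 1] by (simp add: skew_eval_lin_prod[OF aut])
  show ?thesis
  proof (intro conjI impI)
    assume "(u, v) \<in> P"
    then have "?e * \<beta> u v * unit_inv (\<beta> u v) = 0" using P e by (auto simp: adapted_def)
    then show "?e = 0" by (simp add: mult.assoc unit_inv[OF \<beta>])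
  next
    assume "(u, v) \<notin> P"
    then have "?e * \<beta> u v dvd 1" using e unit_if_adapted[OF P] uv by simp
    then show "?e dvd 1" by (rule dvd_mult_left)
  qed
qed

lemma greedy_construction:
  assumes "distinct ps" "set ps \<subseteq> points"
  shows "\<exists>\<gamma>. (\<forall>p. p \<notin> set ps \<longrightarrow> \<gamma> p = case_prod \<beta> p) \<and>
    (ps \<noteq> [] \<longrightarrow> \<gamma> (hd ps) = case_prod \<beta> (hd ps)) \<and>
    (\<forall>p\<in>set ps. \<gamma> p dvd 1) \<and>
    (\<forall>qs. prefix qs ps \<longrightarrow> adapted (conjs \<gamma> qs) (set qs))"
  using assms
proof (induction ps rule: rev_induct)
  case Nil
  show ?case by (intro exI[of _ "case_prod \<beta>"]) (simp add: adapted_Nil conjs_def)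
next
  case (snoc p ps)
  obtain i w where p: "p = (i, w)" by fastforce
  from snoc obtain \<gamma> where
      outside: "\<forall>p. p \<notin> set ps \<longrightarrow> \<gamma> p = case_prod \<beta> p" and
      hd: "ps \<noteq> [] \<longrightarrow> \<gamma> (hd ps) = case_prod \<beta> (hd ps)" and
      units: "\<forall>p\<in>set ps. \<gamma> p dvd 1" and
      prefixes: "\<forall>qs. prefix qs ps \<longrightarrow> adapted (conjs \<gamma> qs) (set qs)"
    by auto
  have new: "(i, w) \<in> points - set ps" using snoc.prems p by auto
  have adapted_ps: "adapted (conjs \<gamma> ps) (set ps)" using prefixes by simp
  define g where "g = skew_op \<sigma> (a i) (conjs \<gamma> ps) (\<beta> i w)"
  have same: "conjs (\<gamma>(p := g)) qs = conjs \<gamma> qs" if "prefix qs ps" for qs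
    using that new p set_mono_prefix by (blast intro: conjs_fun_upd)
  show ?case
  proof (intro exI[of _ "\<gamma>(p := g)"] conjI allI impI ballI)
    fix p' assume "p' \<notin> set (ps @ [p])"
    then show "(\<gamma>(p := g)) p' = case_prod \<beta> p'" using outside by (cases p') simp
  next
    show "(\<gamma>(p := g)) (hd (ps @ [p])) = case_prod \<beta> (hd (ps @ [p]))"
      using hd new p by (cases ps) (auto simp: g_def conjs_def)
  next
    fix p' assume "p' \<in> set (ps @ [p])"
    then show "(\<gamma>(p := g)) p' dvd 1"
      using units unit_if_adapted[OF adapted_ps new] by (auto simp: g_def p)
  next
    fix qs assume "prefix qs (ps @ [p])"
    then consider "qs = ps @ [p]" | "prefix qs ps" by auto
    then show "adapted (conjs (\<gamma>(p := g)) qs) (set qs)"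
    proof cases
      case 1
      then show ?thesis
        using adapted_snoc[OF adapted_ps new] same[of ps] by (simp add: p g_def conjs_snoc)
    next
      case 2
      then show ?thesis using same prefixes by simp
    qed
  qed
qed

lemma G_poly_interpolates:
  assumes adapted: "adapted (conjs \<gamma> (idx_pairs n i j)) (set (idx_pairs n i j))"
  shows "degree (G_poly \<sigma> a (curry \<gamma>) n i j) = (\<Sum>u=1..<i. n u) + j \<and>
    (\<forall>u\<in>{1..l}. \<forall>v\<in>{1..n u}.
      ((u < i \<or> (u = i \<and> v \<le> j)) \<longrightarrow>
         skew_eval \<sigma> (G_poly \<sigma> a (curry \<gamma>) n i j) (sconj \<sigma> (\<beta> u v) (a u)) = 0) \<and>
      ((i < u \<or> (u = i \<and> j < v)) \<longrightarrow>
         is_unit_S (skew_eval \<sigma> (G_poly \<sigma> a (curry \<gamma>) n i j) (sconj \<sigma> (\<beta> u v) (a u)))))"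
proof (intro conjI ballI impI)
  show "degree (G_poly \<sigma> a (curry \<gamma>) n i j) = (\<Sum>u=1..<i. n u) + j"
    using degree_lin_prod[OF aut nontrivial]
    by (simp add: G_poly_eq_lin_prod conjs_def length_idx_pairs)
next
  let ?ev = "\<lambda>u v. skew_eval \<sigma> (G_poly \<sigma> a (curry \<gamma>) n i j) (sconj \<sigma> (\<beta> u v) (a u))"
  fix u v assume "u \<in> {1..l}" "v \<in> {1..n u}"
  then have uv: "(u, v) \<in> points" and "1 \<le> u" "1 \<le> v" "v \<le> n u" by (auto simp: points_def)
  note ev = skew_eval_if_adapted[OF adapted uv, folded G_poly_eq_lin_prod]
  {
    assume "u < i \<or> u = i \<and> v \<le> j"
    then show "?ev u v = 0" using ev \<open>1 \<le> u\<close> \<open>1 \<le> v\<close> \<open>v \<le> n u\<close> by (auto simp: mem_idx_pairs)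
  next
    assume "i < u \<or> u = i \<and> j < v"
    then show "is_unit_S (?ev u v)" using ev by (auto simp: mem_idx_pairs is_unit_S_iff)
  }
qed

end

theorem theorem2:
  fixes R :: "'a::comm_ring_1 set" and h :: "'a poly" and \<theta> :: 'a and \<sigma> :: "'a \<Rightarrow> 'a"
    and l :: nat and n :: "nat \<Rightarrow> nat" and a :: "nat \<Rightarrow> 'a" and \<beta> :: "nat \<Rightarrow> nat \<Rightarrow> 'a"
  assumes setting: "galois_setting R h \<theta> \<sigma>"
    and a_units: "\<forall>i\<in>{1..l}. is_unit_S (a i)"
    and cond_i: "\<forall>b. is_unit_S b \<longrightarrow>
                   (\<forall>i j. 1 \<le> i \<and> i < j \<and> j \<le> l \<longrightarrow> is_unit_S (a i - sconj \<sigma> b (a j)))"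
    and cond_ii: "\<forall>i\<in>{1..l}. \<forall>c. (\<forall>v. c v \<in> R) \<and> (\<Sum>v=1..n i. c v * \<beta> i v) = 0
                     \<longrightarrow> (\<forall>v\<in>{1..n i}. c v = 0)"
  shows "\<exists>\<gamma>. (\<forall>i\<in>{1..l}. \<forall>j\<in>{1..n i}. is_unit_S (\<gamma> i j)) \<and> \<gamma> 1 1 = \<beta> 1 1 \<and>
           (\<forall>i\<in>{1..l}. \<forall>j\<in>{1..n i}.
              degree (G_poly \<sigma> a \<gamma> n i j) = (\<Sum>u=1..<i. n u) + j \<and>
              (\<forall>u\<in>{1..l}. \<forall>v\<in>{1..n u}.
                 ((u < i \<or> (u = i \<and> v \<le> j)) \<longrightarrow>
                    skew_eval \<sigma> (G_poly \<sigma> a \<gamma> n i j) (sconj \<sigma> (\<beta> u v) (a u)) = 0) \<and>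
                 ((i < u \<or> (u = i \<and> j < v)) \<longrightarrow>
                    is_unit_S (skew_eval \<sigma> (G_poly \<sigma> a \<gamma> n i j) (sconj \<sigma> (\<beta> u v) (a u))))))"
proof (cases "l = 0")
  case True
  then show ?thesis by (intro exI[of _ \<beta>]) simp
next
  case False
  interpret skew_interpolation R h \<theta> \<sigma> l n a \<beta>
    using assms by (simp add: skew_interpolation_def skew_interpolation_axioms_def galois_ring_def)
  define ps where "ps = idx_pairs n l (n l)"
  have set_ps: "set ps = points" using False by (auto simp: ps_def points_def mem_idx_pairs)
  obtain \<gamma> where outside: "\<forall>p. p \<notin> set ps \<longrightarrow> \<gamma> p = case_prod \<beta> p"
    and hd: "ps \<noteq> [] \<longrightarrow> \<gamma> (hd ps) = case_prod \<beta> (hd ps)"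
    and units: "\<forall>p\<in>set ps. \<gamma> p dvd 1"
    and adapted: "\<forall>qs. prefix qs ps \<longrightarrow> adapted (conjs \<gamma> qs) (set qs)"
    using greedy_construction[of ps] set_ps by (auto simp: ps_def distinct_idx_pairs)
  have "\<gamma> (1, 1) = \<beta> 1 1"
  proof (cases "(1, 1) \<in> points")
    case True
    then have "prefix [(1, 1)] ps"
      using prefix_idx_pairs[of 1 l 1 n] by (simp add: ps_def points_def idx_pairs_def)
    then show ?thesis using hd by (auto elim: prefixE)
  qed (use outside set_ps in simp)
  moreover have "adapted (conjs \<gamma> (idx_pairs n i j)) (set (idx_pairs n i j))"
    if "i \<in> {1..l}" "j \<in> {1..n i}" for i j
    using adapted prefix_idx_pairs[of i l j n] that by (simp add: ps_def)
  ultimately show ?thesis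
    using units set_ps G_poly_interpolates
    by (intro exI[of _ "curry \<gamma>"]) (auto simp: points_def is_unit_S_iff)
qed

end
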